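(* Assume (H1). For every integer $h\ge1$, $N_1(\mathcal{M}^{(h)})$ and $N_2(\mathcal{M}^{(h)})$ have the same law, and there exist $c_1>0,c_2>0$ such that for all $h$, $$\mathbb{P}(\mathcal{M}^{(h)}\notin J_h)\le c_1\exp(-c_2h^{1/3}).$$
   Context: (H1): $\mu=(\mu_k)_{k\ge0}$ probability on $\mathbb{N}$ with $\mu_0+\mu_1\ne1$, $\sum_kk\mu_k=1$, $\sum_{k\le K}\mu_k=1$ for some integer $K>0$; $\sigma_\mu^2$ is its variance. $I_K=\{(k,j):1\le j\le k\le K\}$; $\mathcal{M}^{(h)}$ is multinomial with parameters $h$ and $(p_{k,j})_{(k,j)\in I_K}$, $p_{k,j}=\mu_k$. $\mathbb{N}^I[h]=\{c\in\mathbb{N}^{I_K}:\sum c_i=h\}$. For $\mathbf{a}\in\mathbb{R}^{I_K}$, $N_1(\mathbf{a})=\sum(j-1)\mathbf{a}_{k,j}$, $N_2(\mathbf{a})=\sum(k-j)\mathbf{a}_{k,j}$. $J_h=\{\mathbf{a}\in\mathbb{N}^I[h]:(N_1(\mathbf{a}),N_2(\mathbf{a}))\in[\tfrac{\sigma_\mu^2}{2}h-h^{2/3},\tfrac{\sigma_\mu^2}{2}h+h^{2/3}]^2\}$. *)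

theory Defs
  imports "HOL-Probability.Probability"
begin

definition IK :: "nat \<Rightarrow> (nat \<times> nat) set" where
  "IK K = {(k, j). 1 \<le> j \<and> j \<le> k \<and> k \<le> K}"

definition H1 :: "(nat \<Rightarrow> real) \<Rightarrow> nat \<Rightarrow> bool" where
  "H1 \<mu> K \<longleftrightarrow> 0 < K \<and> (\<forall>k. 0 \<le> \<mu> k) \<and> (\<forall>k>K. \<mu> k = 0)
     \<and> (\<Sum>k\<le>K. \<mu> k) = 1 \<and> (\<Sum>k\<le>K. real k * \<mu> k) = 1 \<and> \<mu> 0 + \<mu> 1 \<noteq> 1"

text \<open>Variance of mu (mean is 1).\<close>
definition sigma2 :: "(nat \<Rightarrow> real) \<Rightarrow> nat \<Rightarrow> real" where
  "sigma2 \<mu> K = (\<Sum>k\<le>K. (real k - 1)^2 * \<mu> k)"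

text \<open>Categorical law on I_K with p_{k,j} = mu_k (a probability under H1).\<close>
definition cat_IK :: "(nat \<Rightarrow> real) \<Rightarrow> nat \<Rightarrow> (nat \<times> nat) pmf" where
  "cat_IK \<mu> K = embed_pmf (\<lambda>(k, j). if (k, j) \<in> IK K then \<mu> k else 0)"

text \<open>Multinomial law M^(h) with parameters h and (p_{k,j}): counts of h i.i.d. draws.\<close>
fun multinom :: "(nat \<Rightarrow> real) \<Rightarrow> nat \<Rightarrow> nat \<Rightarrow> ((nat \<times> nat) \<Rightarrow> nat) pmf" where
  "multinom \<mu> K 0 = return_pmf (\<lambda>_. 0)"
| "multinom \<mu> K (Suc h) =
     bind_pmf (multinom \<mu> K h) (\<lambda>c. map_pmf (\<lambda>i. c(i := c i + 1)) (cat_IK \<mu> K))"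

definition N1 :: "nat \<Rightarrow> ((nat \<times> nat) \<Rightarrow> 'a::real_vector) \<Rightarrow> 'a" where
  "N1 K a = (\<Sum>(k, j)\<in>IK K. (real j - 1) *\<^sub>R a (k, j))"

definition N2 :: "nat \<Rightarrow> ((nat \<times> nat) \<Rightarrow> 'a::real_vector) \<Rightarrow> 'a" where
  "N2 K a = (\<Sum>(k, j)\<in>IK K. (real k - real j) *\<^sub>R a (k, j))"

definition NI :: "nat \<Rightarrow> nat \<Rightarrow> ((nat \<times> nat) \<Rightarrow> nat) set" where
  "NI K h = {c. (\<forall>i. i \<notin> IK K \<longrightarrow> c i = 0) \<and> (\<Sum>i\<in>IK K. c i) = h}"

definition J :: "(nat \<Rightarrow> real) \<Rightarrow> nat \<Rightarrow> nat \<Rightarrow> ((nat \<times> nat) \<Rightarrow> nat) set" where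
  "J \<mu> K h = {a \<in> NI K h.
     let lo = sigma2 \<mu> K / 2 * real h - real h powr (2/3);
         hi = sigma2 \<mu> K / 2 * real h + real h powr (2/3)
     in N1 K (real \<circ> a) \<in> {lo..hi} \<and> N2 K (real \<circ> a) \<in> {lo..hi}}"

end

theory Submission
  imports Defs
begin

text \<open>
  Reflecting each row of I_K, (k, j) \<mapsto> (k, k + 1 - j), preserves the cell probabilities
  p_{k,j} = \<mu>_k and exchanges the weights j - 1 and k - j; so it preserves the law of M^(h) and
  carries N_1 to N_2. Moreover N_1(M^(h)) is a sum of h i.i.d. copies of j - 1 \<in> [0, K] for a
  random cell (k, j), whose mean is E[k(k - 1)/2] = \<sigma>^2/2 because \<mu> has mean 1. Hoeffding's
  inequality at deviation h^(2/3) bounds each of the four tails of N_1 and N_2 by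
  exp (- 2 h^(1/3) / K^2).
\<close>

fun sum_iid_pmf :: "'x pmf \<Rightarrow> ('x \<Rightarrow> real) \<Rightarrow> nat \<Rightarrow> real pmf" where
  "sum_iid_pmf p F 0 = return_pmf 0"
| "sum_iid_pmf p F (Suc h) = bind_pmf (sum_iid_pmf p F h) (\<lambda>s. map_pmf (\<lambda>x. s + F x) p)"

lemma sum_iid_pmf_uminus:
  "sum_iid_pmf p (\<lambda>x. - F x) h = map_pmf uminus (sum_iid_pmf p F h)"
  by (induction h) (simp_all add: map_bind_pmf bind_map_pmf map_pmf_comp)

lemma nn_integral_exp_sum_iid_pmf_le:
  assumes F: "\<And>x. x \<in> set_pmf p \<Longrightarrow> F x \<in> {a..b}" and l: "l > 0"
  defines "m \<equiv> measure_pmf.expectation p F"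
  shows "(\<integral>\<^sup>+s. exp (l * (s - real h * m)) \<partial>sum_iid_pmf p F h)
           \<le> ennreal (exp (real h * (l\<^sup>2 * (b - a)\<^sup>2 / 8)))"
proof (induction h)
  case 0
  show ?case by simp
next
  case (Suc h)
  define D where "D = l\<^sup>2 * (b - a)\<^sup>2 / 8"
  interpret F: interval_bounded_random_variable "measure_pmf p" F a b
    by unfold_locales (use F in \<open>auto simp: AE_measure_pmf_iff\<close>)
  have step: "(\<integral>\<^sup>+x. exp (l * (F x - m)) \<partial>p) \<le> ennreal (exp D)"
    unfolding m_def D_def by (rule F.Hoeffdings_lemma_nn_integral[OF l])
  have "(\<integral>\<^sup>+s. exp (l * (s - real (Suc h) * m)) \<partial>sum_iid_pmf p F (Suc h))
      = (\<integral>\<^sup>+s. \<integral>\<^sup>+x. ennreal (exp (l * (s - real h * m))) * exp (l * (F x - m)) \<partial>p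
            \<partial>sum_iid_pmf p F h)"
    by (simp add: algebra_simps flip: exp_add ennreal_mult')
  also have "\<dots> = (\<integral>\<^sup>+s. ennreal (exp (l * (s - real h * m))) * \<integral>\<^sup>+x. exp (l * (F x - m)) \<partial>p
                      \<partial>sum_iid_pmf p F h)"
    by (simp add: nn_integral_cmult)
  also have "\<dots> \<le> (\<integral>\<^sup>+s. ennreal (exp (l * (s - real h * m))) * exp D
                      \<partial>sum_iid_pmf p F h)"
    by (intro nn_integral_mono mult_left_mono step) auto
  also have "\<dots> = (\<integral>\<^sup>+s. exp (l * (s - real h * m)) \<partial>sum_iid_pmf p F h) * ennreal (exp D)"
    by (simp add: nn_integral_multc)
  also have "\<dots> \<le> ennreal (exp (real h * D)) * exp D"
    using Suc.IH by (intro mult_right_mono) (auto simp: D_def)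
  also have "\<dots> = ennreal (exp (real (Suc h) * D))"
    by (simp add: ennreal_mult[symmetric] exp_add[symmetric] algebra_simps)
  finally show ?case by (simp add: D_def)
qed

lemma sum_iid_pmf_Hoeffding_ge:
  assumes F: "\<And>x. x \<in> set_pmf p \<Longrightarrow> F x \<in> {a..b}"
    and "a < b" and "h > 0" and "\<epsilon> > 0"
  shows "measure_pmf.prob (sum_iid_pmf p F h)
           {s. real h * measure_pmf.expectation p F + \<epsilon> \<le> s}
         \<le> exp (- 2 * \<epsilon>\<^sup>2 / (real h * (b - a)\<^sup>2))"
proof -
  define m where "m = measure_pmf.expectation p F"
  define d where "d = real h * (b - a)\<^sup>2"
  have "d > 0" using assms by (simp add: d_def)
  define l where "l = 4 * \<epsilon> / d" \<comment> \<open>minimises \<open>- l * \<epsilon> + l\<^sup>2 * d / 8\<close>\<close>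
  have "l > 0" using \<open>d > 0\<close> \<open>\<epsilon> > 0\<close> by (simp add: l_def)
  have "ennreal (measure_pmf.prob (sum_iid_pmf p F h) {s. real h * m + \<epsilon> \<le> s})
      = emeasure (sum_iid_pmf p F h) {s \<in> UNIV. \<epsilon> \<le> s - real h * m}"
    by (simp add: measure_pmf.emeasure_eq_measure algebra_simps)
  also have "\<dots> \<le> ennreal (exp (- l * \<epsilon>))
      * (\<integral>\<^sup>+s. ennreal (exp (l * (s - real h * m))) * indicator UNIV s \<partial>sum_iid_pmf p F h)"
    by (rule Chernoff_ineq_nn_integral_ge[OF \<open>l > 0\<close>]) auto
  also have "\<dots> \<le> ennreal (exp (- l * \<epsilon>)) * exp (real h * (l\<^sup>2 * (b - a)\<^sup>2 / 8))"
    using nn_integral_exp_sum_iid_pmf_le[OF F \<open>l > 0\<close>, where h = h]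
    by (intro mult_left_mono) (simp_all add: m_def)
  also have "\<dots> = ennreal (exp (- l * \<epsilon> + l\<^sup>2 * d / 8))"
    by (simp add: d_def algebra_simps flip: ennreal_mult exp_add)
  also have "- l * \<epsilon> + l\<^sup>2 * d / 8 = - 2 * \<epsilon>\<^sup>2 / d"
    using \<open>d > 0\<close> by (simp add: l_def power2_eq_square field_simps)
  finally show ?thesis
    by (simp add: d_def m_def)
qed

lemma sum_iid_pmf_Hoeffding_abs:
  assumes F: "\<And>x. x \<in> set_pmf p \<Longrightarrow> F x \<in> {a..b}"
    and "a < b" and "h > 0" and "\<epsilon> > 0"
  shows "measure_pmf.prob (sum_iid_pmf p F h)
           {s. \<epsilon> \<le> \<bar>s - real h * measure_pmf.expectation p F\<bar>}
         \<le> 2 * exp (- 2 * \<epsilon>\<^sup>2 / (real h * (b - a)\<^sup>2))"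
proof -
  let ?m = "measure_pmf.expectation p F" and ?B = "exp (- 2 * \<epsilon>\<^sup>2 / (real h * (b - a)\<^sup>2))"
  let ?P = "measure_pmf.prob (sum_iid_pmf p F h)"
  have upper: "?P {s. real h * ?m + \<epsilon> \<le> s} \<le> ?B"
    by (rule sum_iid_pmf_Hoeffding_ge[OF F assms(2-4)])
  have "measure_pmf.prob (sum_iid_pmf p (\<lambda>x. - F x) h)
          {s. real h * measure_pmf.expectation p (\<lambda>x. - F x) + \<epsilon> \<le> s}
        \<le> exp (- 2 * \<epsilon>\<^sup>2 / (real h * (- a - - b)\<^sup>2))"
    using F assms(2-4) by (intro sum_iid_pmf_Hoeffding_ge) auto
  hence lower: "?P {s. s \<le> real h * ?m - \<epsilon>} \<le> ?B"
    by (simp add: sum_iid_pmf_uminus vimage_def algebra_simps)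
  have "?P {s. \<epsilon> \<le> \<bar>s - real h * ?m\<bar>}
      = ?P ({s. real h * ?m + \<epsilon> \<le> s} \<union> {s. s \<le> real h * ?m - \<epsilon>})"
    by (rule arg_cong[where f = ?P]) auto
  also have "\<dots> \<le> ?P {s. real h * ?m + \<epsilon> \<le> s} + ?P {s. s \<le> real h * ?m - \<epsilon>}"
    by (rule measure_Un_le) auto
  finally show ?thesis using upper lower by linarith
qed

lemma IK_eq_Sigma: "IK K = Sigma {1..K} (\<lambda>k. {1..k})"
  by (auto simp: IK_def)

lemma finite_IK [simp]: "finite (IK K)"
  by (simp add: IK_eq_Sigma)

lemma sum_IK: "(\<Sum>(k, j)\<in>IK K. f k j) = (\<Sum>k=1..K. \<Sum>j=1..k. f k j)"
  unfolding IK_eq_Sigma by (simp add: sum.Sigma)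

lemma pmf_cat_IK:
  assumes "H1 \<mu> K"
  shows "pmf (cat_IK \<mu> K) i = (if i \<in> IK K then \<mu> (fst i) else 0)"
proof -
  let ?f = "\<lambda>(k, j). if (k, j) \<in> IK K then \<mu> k else 0"
  \<comment> \<open>The mass is \<open>\<Sum>k. k * \<mu> k\<close>, which is 1 because \<open>\<mu>\<close> has mean 1.\<close>
  have "(\<Sum>(k, j)\<in>IK K. \<mu> k) = (\<Sum>k\<le>K. real k * \<mu> k)"
    by (simp add: sum_IK atLeast1_atMost_eq_remove0 sum.remove[of "{..K}" 0])
  hence "(\<integral>\<^sup>+x. ennreal (?f x) \<partial>count_space UNIV) = 1"
    using assms
    by (subst nn_integral_count_space'[where A = "IK K"])
       (auto simp: H1_def case_prod_unfold sum_ennreal intro!: sum_nonneg)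
  moreover have "\<And>x. 0 \<le> ?f x" using assms by (auto simp: H1_def)
  ultimately show ?thesis
    unfolding cat_IK_def by (subst pmf_embed_pmf) (auto simp: case_prod_unfold)
qed

lemma set_pmf_cat_IK: "H1 \<mu> K \<Longrightarrow> set_pmf (cat_IK \<mu> K) \<subseteq> IK K"
  by (auto simp: set_pmf_eq pmf_cat_IK split: if_splits)

lemma sum_IK_fun_upd_Suc:
  assumes "i \<in> IK K"
  shows "(\<Sum>x\<in>IK K. w x * real ((c(i := Suc (c i))) x)) = (\<Sum>x\<in>IK K. w x * real (c x)) + w i"
proof -
  have "(\<Sum>x\<in>IK K. w x * real ((c(i := Suc (c i))) x))
      = (\<Sum>x\<in>IK K. w x * real (c x) + (if x = i then w i else 0))"
    by (intro sum.cong) (auto simp: algebra_simps)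
  thus ?thesis using assms by (simp add: sum.distrib)
qed

lemma multinom_linear_statistic:
  assumes "H1 \<mu> K"
  shows "map_pmf (\<lambda>c. \<Sum>x\<in>IK K. w x * real (c x)) (multinom \<mu> K h)
       = sum_iid_pmf (cat_IK \<mu> K) w h"
proof (induction h)
  case (Suc h)
  have "map_pmf (\<lambda>c. \<Sum>x\<in>IK K. w x * real (c x)) (multinom \<mu> K (Suc h))
      = bind_pmf (multinom \<mu> K h)
          (\<lambda>c. map_pmf (\<lambda>i. (\<Sum>x\<in>IK K. w x * real (c x)) + w i) (cat_IK \<mu> K))"
    unfolding multinom.simps map_bind_pmf map_pmf_comp
    using set_pmf_cat_IK[OF assms]
    by (intro bind_pmf_cong refl map_pmf_cong) (auto simp del: fun_upd_apply intro!: sum_IK_fun_upd_Suc)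
  also have "\<dots> = sum_iid_pmf (cat_IK \<mu> K) w (Suc h)"
    by (simp add: Suc.IH[symmetric] bind_map_pmf)
  finally show ?case .
qed simp

lemma set_pmf_multinom: "H1 \<mu> K \<Longrightarrow> set_pmf (multinom \<mu> K h) \<subseteq> NI K h"
proof (induction h)
  case 0
  show ?case by (auto simp: NI_def)
next
  case (Suc h)
  show ?case
  proof
    fix c assume "c \<in> set_pmf (multinom \<mu> K (Suc h))"
    then obtain c' i where "c' \<in> set_pmf (multinom \<mu> K h)" "i \<in> set_pmf (cat_IK \<mu> K)"
      and c: "c = c'(i := c' i + 1)"
      by auto
    hence "c' \<in> NI K h" and i: "i \<in> IK K"
      using Suc set_pmf_cat_IK[OF Suc.prems] by auto
    have "(\<Sum>x\<in>IK K. c x) = (\<Sum>x\<in>IK K. c' x + (if x = i then 1 else 0))"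
      unfolding c by (intro sum.cong) auto
    thus "c \<in> NI K (Suc h)"
      using \<open>c' \<in> NI K h\<close> i c by (auto simp: NI_def sum.distrib)
  qed
qed

definition reflect_IK :: "nat \<Rightarrow> nat \<times> nat \<Rightarrow> nat \<times> nat" where
  "reflect_IK K x = (if x \<in> IK K then (fst x, fst x + 1 - snd x) else x)"

lemma reflect_IK_in_IK: "x \<in> IK K \<Longrightarrow> reflect_IK K x \<in> IK K"
  by (auto simp: reflect_IK_def IK_def)

lemma reflect_IK_reflect_IK [simp]: "reflect_IK K (reflect_IK K x) = x"
  by (auto simp: reflect_IK_def IK_def)

lemma inj_reflect_IK: "inj (reflect_IK K)"
  by (metis injI reflect_IK_reflect_IK)

lemma map_pmf_reflect_cat_IK:
  assumes "H1 \<mu> K"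
  shows "map_pmf (reflect_IK K) (cat_IK \<mu> K) = cat_IK \<mu> K"
proof (rule pmf_eqI)
  fix x
  have "pmf (map_pmf (reflect_IK K) (cat_IK \<mu> K)) x = pmf (cat_IK \<mu> K) (reflect_IK K x)"
    using pmf_map_inj'[OF inj_reflect_IK, of K "cat_IK \<mu> K" "reflect_IK K x"] by simp
  also have "\<dots> = pmf (cat_IK \<mu> K) x"
    by (auto simp: pmf_cat_IK[OF assms] reflect_IK_def IK_def)
  finally show "pmf (map_pmf (reflect_IK K) (cat_IK \<mu> K)) x = pmf (cat_IK \<mu> K) x" .
qed

lemma fun_upd_comp_reflect_IK:
  "c(i := n) \<circ> reflect_IK K = (c \<circ> reflect_IK K)(reflect_IK K i := n)"
proof (rule ext)
  fix x
  have "reflect_IK K x = i \<longleftrightarrow> x = reflect_IK K i"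
    by (metis reflect_IK_reflect_IK)
  thus "(c(i := n) \<circ> reflect_IK K) x = ((c \<circ> reflect_IK K)(reflect_IK K i := n)) x"
    by simp
qed


lemma map_pmf_multinom_comp_reflect_IK:
  assumes "H1 \<mu> K"
  shows "map_pmf (\<lambda>c. c \<circ> reflect_IK K) (multinom \<mu> K h) = multinom \<mu> K h"
proof (induction h)
  case (Suc h)
  have upd: "c(i := c i + 1) \<circ> reflect_IK K
      = (c \<circ> reflect_IK K)(reflect_IK K i := (c \<circ> reflect_IK K) (reflect_IK K i) + 1)" for c i
    by (simp add: fun_upd_comp_reflect_IK)
  have "map_pmf (\<lambda>c. c \<circ> reflect_IK K) (multinom \<mu> K (Suc h))
      = bind_pmf (multinom \<mu> K h)
          (\<lambda>c. map_pmf (\<lambda>i. (c \<circ> reflect_IK K)(i := (c \<circ> reflect_IK K) i + 1))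
                 (map_pmf (reflect_IK K) (cat_IK \<mu> K)))"
    unfolding multinom.simps map_bind_pmf map_pmf_comp upd ..
  also have "\<dots> = bind_pmf (map_pmf (\<lambda>c. c \<circ> reflect_IK K) (multinom \<mu> K h))
                      (\<lambda>c. map_pmf (\<lambda>i. c(i := c i + 1)) (cat_IK \<mu> K))"
    by (simp add: bind_map_pmf map_pmf_reflect_cat_IK[OF assms])
  also have "\<dots> = multinom \<mu> K (Suc h)"
    by (simp add: Suc.IH)
  finally show ?case .
qed (simp add: comp_def)

lemma N2_eq_N1_comp_reflect_IK: "N2 K (real \<circ> c) = N1 K (real \<circ> (c \<circ> reflect_IK K))"
  unfolding N1_def N2_def
proof (rule sum.reindex_bij_witness[of _ "reflect_IK K" "reflect_IK K"])
  fix x assume "x \<in> IK K"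
  thus "(case reflect_IK K x of (k, j) \<Rightarrow> (real j - 1) *\<^sub>R (real \<circ> (c \<circ> reflect_IK K)) (k, j))
      = (case x of (k, j) \<Rightarrow> (real k - real j) *\<^sub>R (real \<circ> c) (k, j))"
    by (auto simp: reflect_IK_def IK_def of_nat_diff)
qed (auto simp: reflect_IK_in_IK)

lemma map_pmf_N1_multinom_eq_N2:
  assumes "H1 \<mu> K"
  shows "map_pmf (\<lambda>c. N1 K (real \<circ> c)) (multinom \<mu> K h)
       = map_pmf (\<lambda>c. N2 K (real \<circ> c)) (multinom \<mu> K h)"
proof -
  have "map_pmf (\<lambda>c. N2 K (real \<circ> c)) (multinom \<mu> K h)
      = map_pmf (\<lambda>c. N1 K (real \<circ> c)) (map_pmf (\<lambda>c. c \<circ> reflect_IK K) (multinom \<mu> K h))"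
    by (simp add: map_pmf_comp N2_eq_N1_comp_reflect_IK o_assoc)
  thus ?thesis by (simp add: map_pmf_multinom_comp_reflect_IK[OF assms])
qed

lemma sum_atLeast1_atMost_real_minus_1: "(\<Sum>j=1..k. real j - 1) = real k * (real k - 1) / 2"
  by (induction k) (auto simp: field_simps)

lemma expectation_cat_IK_N1_weight:
  assumes "H1 \<mu> K"
  shows "measure_pmf.expectation (cat_IK \<mu> K) (\<lambda>x. real (snd x) - 1) = sigma2 \<mu> K / 2"
proof -
  have "measure_pmf.expectation (cat_IK \<mu> K) (\<lambda>x. real (snd x) - 1)
      = (\<Sum>x\<in>IK K. (real (snd x) - 1) * pmf (cat_IK \<mu> K) x)"
    using set_pmf_cat_IK[OF assms] by (intro integral_measure_pmf_real) auto
  also have "\<dots> = (\<Sum>(k, j)\<in>IK K. (real j - 1) * \<mu> k)"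
    by (intro sum.cong) (auto simp: pmf_cat_IK[OF assms])
  also have "\<dots> = (\<Sum>k=1..K. (\<Sum>j=1..k. real j - 1) * \<mu> k)"
    by (simp add: sum_IK sum_distrib_right)
  also have "\<dots> = (\<Sum>k\<le>K. real k * (real k - 1) / 2 * \<mu> k)"
    unfolding sum_atLeast1_atMost_real_minus_1 by (rule sum.mono_neutral_left) auto
  also have "\<dots> = (\<Sum>k\<le>K. ((real k - 1)\<^sup>2 * \<mu> k + (real k * \<mu> k - \<mu> k)) / 2)"
    by (intro sum.cong) (auto simp: power2_eq_square field_simps)
  also have "\<dots> = sigma2 \<mu> K / 2"
    using assms by (simp add: sum_divide_distrib[symmetric] sum.distrib sum_subtractf sigma2_def H1_def)
  finally show ?thesis .
qed

lemma prob_N1_deviation_le: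
  assumes "H1 \<mu> K" and "h > 0" and "\<epsilon> > 0"
  shows "measure_pmf.prob (multinom \<mu> K h)
           {c. \<epsilon> \<le> \<bar>N1 K (real \<circ> c) - real h * (sigma2 \<mu> K / 2)\<bar>}
         \<le> 2 * exp (- 2 * \<epsilon>\<^sup>2 / (real h * (real K)\<^sup>2))"
proof -
  define w where "w = (\<lambda>x :: nat \<times> nat. real (snd x) - 1)"
  have N1_eq: "N1 K (real \<circ> c) = (\<Sum>x\<in>IK K. w x * real (c x))" for c
    by (simp add: N1_def w_def case_prod_unfold)
  have "measure_pmf.prob (multinom \<mu> K h)
          {c. \<epsilon> \<le> \<bar>N1 K (real \<circ> c) - real h * (sigma2 \<mu> K / 2)\<bar>}
      = measure_pmf.prob (sum_iid_pmf (cat_IK \<mu> K) w h)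
          {s. \<epsilon> \<le> \<bar>s - real h * measure_pmf.expectation (cat_IK \<mu> K) w\<bar>}"
    by (simp add: multinom_linear_statistic[OF assms(1), symmetric] N1_eq vimage_def w_def
        expectation_cat_IK_N1_weight[OF assms(1)])
  also have "\<dots> \<le> 2 * exp (- 2 * \<epsilon>\<^sup>2 / (real h * (real K - 0)\<^sup>2))"
    using set_pmf_cat_IK[OF assms(1)] assms
    by (intro sum_iid_pmf_Hoeffding_abs) (auto simp: w_def IK_def H1_def)
  finally show ?thesis by simp
qed

lemma not_in_J_deviation:
  assumes "c \<in> NI K h" and "c \<notin> J \<mu> K h"
  shows "real h powr (2/3) \<le> \<bar>N1 K (real \<circ> c) - real h * (sigma2 \<mu> K / 2)\<bar>
       \<or> real h powr (2/3) \<le> \<bar>N2 K (real \<circ> c) - real h * (sigma2 \<mu> K / 2)\<bar>"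
  using assms by (rule_tac ccontr) (auto simp: J_def Let_def not_le abs_less_iff algebra_simps)

lemma prob_not_in_J_le:
  assumes "H1 \<mu> K" and "1 \<le> h"
  shows "measure_pmf.prob (multinom \<mu> K h) {c. c \<notin> J \<mu> K h}
           \<le> 4 * exp (- (2 / (real K)\<^sup>2) * real h powr (1/3))"
proof -
  let ?P = "measure_pmf.prob (multinom \<mu> K h)" and ?m = "real h * (sigma2 \<mu> K / 2)"
  define \<epsilon> where "\<epsilon> = real h powr (2/3)"
  define dev where
    "dev = (\<lambda>N :: nat \<Rightarrow> (nat \<times> nat \<Rightarrow> real) \<Rightarrow> real. {c. \<epsilon> \<le> \<bar>N K (real \<circ> c) - ?m\<bar>})"
  have "\<epsilon>\<^sup>2 = real h powr (1 + 1/3)"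
    by (simp add: \<epsilon>_def power2_eq_square flip: powr_add)
  hence "\<epsilon>\<^sup>2 = real h powr 1 * real h powr (1/3)"
    by (simp only: powr_add)
  hence "2 * \<epsilon>\<^sup>2 / (real h * (real K)\<^sup>2) = 2 / (real K)\<^sup>2 * real h powr (1/3)"
    using \<open>1 \<le> h\<close> by simp
  hence N1_dev: "?P (dev N1) \<le> 2 * exp (- (2 / (real K)\<^sup>2) * real h powr (1/3))"
    using prob_N1_deviation_le[OF assms(1), of h \<epsilon>] \<open>1 \<le> h\<close> by (simp add: dev_def \<epsilon>_def)
  have N2_dev: "?P (dev N2) = ?P (dev N1)"
    using arg_cong[OF map_pmf_N1_multinom_eq_N2[OF assms(1), of h],
        of "\<lambda>M. measure_pmf.prob M {s. \<epsilon> \<le> \<bar>s - ?m\<bar>}"]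
    by (simp add: dev_def vimage_def)
  have "?P {c. c \<notin> J \<mu> K h} = ?P ({c. c \<notin> J \<mu> K h} \<inter> set_pmf (multinom \<mu> K h))"
    by (simp add: measure_Int_set_pmf)
  also have "\<dots> \<le> ?P (dev N1 \<union> dev N2)"
    using set_pmf_multinom[OF assms(1), of h] not_in_J_deviation[of _ K h \<mu>]
    by (intro measure_pmf.finite_measure_mono) (auto simp: dev_def \<epsilon>_def)
  also have "\<dots> \<le> ?P (dev N1) + ?P (dev N2)"
    by (rule measure_Un_le) auto
  finally show ?thesis
    using N1_dev N2_dev by linarith
qed

theorem lemma9:
  fixes \<mu> :: "nat \<Rightarrow> real" and K :: nat
  assumes "H1 \<mu> K"
  shows "(\<forall>h\<ge>1. map_pmf (\<lambda>c. N1 K (real \<circ> c)) (multinom \<mu> K h)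
                  = map_pmf (\<lambda>c. N2 K (real \<circ> c)) (multinom \<mu> K h))
       \<and> (\<exists>c1>0. \<exists>c2>0. \<forall>h\<ge>1.
            measure_pmf.prob (multinom \<mu> K h) {c. c \<notin> J \<mu> K h}
              \<le> c1 * exp (- c2 * real h powr (1/3)))"
proof (intro conjI)
  show "\<forall>h\<ge>1. map_pmf (\<lambda>c. N1 K (real \<circ> c)) (multinom \<mu> K h)
                = map_pmf (\<lambda>c. N2 K (real \<circ> c)) (multinom \<mu> K h)"
    using map_pmf_N1_multinom_eq_N2[OF assms] by blast
  have "(4 :: real) > 0" and "2 / (real K)\<^sup>2 > 0"
    using assms by (simp_all add: H1_def)
  thus "\<exists>c1>0. \<exists>c2>0. \<forall>h\<ge>1. measure_pmf.prob (multinom \<mu> K h) {c. c \<notin> J \<mu> K h}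
          \<le> c1 * exp (- c2 * real h powr (1/3))"
    using prob_not_in_J_le[OF assms] by blast
qed

end
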